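(* For every integer $n\ge2$, $B(n+2)\ge 2B(n)+1$.
   Context: Fix a field $\mathbb{F}$. All algebras are finite-dimensional, unital, not necessarily associative $\mathbb{F}$-algebras. For a finite generating set $S$ of an algebra $\mathcal{A}$, a word in $S$ is any product (with any bracketing) of finitely many elements of $S$; its length is the number of factors, and $1$ is a word of length $0$. $L_i(S)$ is the linear span of all words in $S$ of length at most $i$. The length of $S$ is $l(S)=\min\{k\ge0: L_k(S)=\mathcal{A}\}$, and $l(\mathcal{A})=\max\{l(S): S\text{ a finite generating set of }\mathcal{A}\}$. For a natural number $n\ge2$, $B(n)$ denotes the maximal integer $l>0$ such that for every $j\in\{1,\ldots,l\}$ there exists an algebra of dimension $n$ and length $j$. *)

theory Defs
  imports Main
begin

text \<open>An n-dimensional algebra over the field 'a is modelled (up to isomorphism) on the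
 coordinate space F^n, represented as functions nat => 'a vanishing at indices >= n,
 with a bilinear multiplication and a two-sided unit.\<close>

definition vecs :: "nat \<Rightarrow> (nat \<Rightarrow> 'a::field) set" where
  "vecs n = {v. \<forall>i\<ge>n. v i = 0}"

definition lin_span :: "(nat \<Rightarrow> 'a::field) set \<Rightarrow> (nat \<Rightarrow> 'a) set" where
  "lin_span X = {v. \<exists>T c. finite T \<and> T \<subseteq> X \<and> v = (\<lambda>k. \<Sum>t\<in>T. c t * t k)}"

definition is_algebra ::
  "nat \<Rightarrow> ((nat \<Rightarrow> 'a::field) \<Rightarrow> (nat \<Rightarrow> 'a) \<Rightarrow> (nat \<Rightarrow> 'a)) \<Rightarrow> (nat \<Rightarrow> 'a) \<Rightarrow> bool" where
  "is_algebra n m u \<longleftrightarrow>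
     u \<in> vecs n \<and>
     (\<forall>x\<in>vecs n. \<forall>y\<in>vecs n. m x y \<in> vecs n) \<and>
     (\<forall>x\<in>vecs n. \<forall>y\<in>vecs n. \<forall>z\<in>vecs n.
        m (\<lambda>k. x k + y k) z = (\<lambda>k. m x z k + m y z k) \<and>
        m z (\<lambda>k. x k + y k) = (\<lambda>k. m z x k + m z y k)) \<and>
     (\<forall>c. \<forall>x\<in>vecs n. \<forall>y\<in>vecs n.
        m (\<lambda>k. c * x k) y = (\<lambda>k. c * m x y k) \<and>
        m x (\<lambda>k. c * y k) = (\<lambda>k. c * m x y k)) \<and>
     (\<forall>x\<in>vecs n. m u x = x \<and> m x u = x)"

inductive is_word ::
  "((nat \<Rightarrow> 'a::field) \<Rightarrow> (nat \<Rightarrow> 'a) \<Rightarrow> (nat \<Rightarrow> 'a)) \<Rightarrow> (nat \<Rightarrow> 'a) \<Rightarrow> (nat \<Rightarrow> 'a) set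
     \<Rightarrow> (nat \<Rightarrow> 'a) \<Rightarrow> nat \<Rightarrow> bool"
  for m u S where
  word_unit: "is_word m u S u 0"
| word_gen: "s \<in> S \<Longrightarrow> is_word m u S s 1"
| word_mult: "is_word m u S a p \<Longrightarrow> is_word m u S b q \<Longrightarrow> 1 \<le> p \<Longrightarrow> 1 \<le> q
     \<Longrightarrow> is_word m u S (m a b) (p + q)"

definition Lspan where
  "Lspan m u S i = lin_span {w. \<exists>k\<le>i. is_word m u S w k}"

definition generates where
  "generates n m u S \<longleftrightarrow> finite S \<and> S \<subseteq> vecs n \<and> (\<exists>k. Lspan m u S k = vecs n)"

definition gen_length where
  "gen_length n m u S = (LEAST k. Lspan m u S k = vecs n)"

definition alg_has_length where
  "alg_has_length n m u l \<longleftrightarrow>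
     (\<exists>S. generates n m u S \<and> gen_length n m u S = l) \<and>
     (\<forall>S. generates n m u S \<longrightarrow> gen_length n m u S \<le> l)"

definition B :: "'a::field itself \<Rightarrow> nat \<Rightarrow> nat" where
  "B _ n = (GREATEST l. 0 < l \<and>
     (\<forall>j\<in>{1..l}. \<exists>(m :: (nat \<Rightarrow> 'a) \<Rightarrow> (nat \<Rightarrow> 'a) \<Rightarrow> (nat \<Rightarrow> 'a)) u.
        is_algebra n m u \<and> alg_has_length n m u j))"

end

(*
  For j >= 1 there is an algebra of dimension N and length j iff j has an addition chain with
  fewer than N elements, i.e. a set D of positive integers containing 1 and j in which every
  element other than 1 is the sum of two elements of D.

  If S is a generating set of maximal length j, the indices i with L_i(S) <> L_(i-1)(S) form
  such a chain: a new word of length i is a product of two words whose lengths are again such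
  indices, and since L_0(S) is spanned by the nonzero unit, each of them raises the dimension.
  Conversely, a chain D yields a graded monomial algebra with unit e_0 and basis vectors e_d of
  degree d (d in D), where e_a e_b = e_(a+b) if a+b is in D and 0 otherwise, padded with basis
  vectors of degree 1 whose products vanish.  The degree-1 basis vectors generate it in length
  exactly j, and comparing any generating set with them degree by degree shows that no
  generating set needs more.

  Adding 2k, resp. 2k and 2k+1, to a chain for k gives chains for 2k and 2k+1 with at most two
  more elements, so all lengths up to 2 B(n) + 1 occur in dimension n + 2.
*)

theory Submission
  imports Defs HOL.Vector_Spaces "HOL-Library.Function_Algebras"
begin

section \<open>Addition chains\<close>

definition addition_chain :: "nat set \<Rightarrow> nat \<Rightarrow> bool" where
  "addition_chain D j \<longleftrightarrow> finite D \<and> 1 \<in> D \<and> j \<in> D \<and> D \<subseteq> {1..j} \<and>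
     (\<forall>i\<in>D. 1 < i \<longrightarrow> (\<exists>p\<in>D. \<exists>q\<in>D. p + q = i))"

definition addition_chain_fits :: "nat \<Rightarrow> nat \<Rightarrow> bool" where
  "addition_chain_fits N j \<longleftrightarrow> (\<exists>D. addition_chain D j \<and> card D < N)"

lemma addition_chain_one: "addition_chain {1} 1"
  by (simp add: addition_chain_def)

lemma addition_chain_fits_one: "2 \<le> N \<Longrightarrow> addition_chain_fits N 1"
  using addition_chain_one by (force simp: addition_chain_fits_def)

lemma addition_chain_extend:
  assumes "addition_chain D k" "p \<in> D" "q \<in> D" "k \<le> p + q"
  shows "addition_chain (insert (p + q) D) (p + q)"
  using assms unfolding addition_chain_def by (auto 4 3)

lemma addition_chain_fits_half:
  assumes "addition_chain_fits N (j div 2)"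
  shows "addition_chain_fits (N + 2) j"
proof -
  define k where "k = j div 2"
  obtain D where D: "addition_chain D k" "card D < N"
    using assms by (auto simp: addition_chain_fits_def k_def)
  have "finite D" "1 \<in> D" "k \<in> D" using D(1) by (auto simp: addition_chain_def)
  have double: "addition_chain (insert (k + k) D) (k + k)"
    using addition_chain_extend[OF D(1) \<open>k \<in> D\<close> \<open>k \<in> D\<close>] by simp
  have card_double: "card (insert (k + k) D) < N + 1"
    using D(2) \<open>finite D\<close> by (simp add: card_insert_if)
  consider "j = k + k" | "j = k + k + 1" unfolding k_def by linarith
  then show ?thesis
  proof cases
    case 1
    then show ?thesis using double card_double by (auto simp: addition_chain_fits_def)
  next
    case 2
    have "addition_chain (insert (k + k + 1) (insert (k + k) D)) (k + k + 1)"
      by (rule addition_chain_extend[OF double]) (use \<open>1 \<in> D\<close> in auto)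
    moreover have "card (insert (k + k + 1) (insert (k + k) D)) < N + 2"
        using card_double \<open>finite D\<close> by (simp add: card_insert_if)
    ultimately show ?thesis using 2 by (auto simp: addition_chain_fits_def)
  qed
qed

lemma addition_chain_le_pow:
  assumes "addition_chain D j"
  shows "j \<le> 2 ^ (card D - 1)"
proof -
  have fin: "finite D" and pos: "\<And>i. i \<in> D \<Longrightarrow> 1 \<le> i"
    and split: "\<And>i. i \<in> D \<Longrightarrow> 1 < i \<Longrightarrow> \<exists>p\<in>D. \<exists>q\<in>D. p + q = i"
    using assms by (auto simp: addition_chain_def)
  have "i \<le> 2 ^ card {x\<in>D. x < i}" if "i \<in> D" for i
    using that
  proof (induct i rule: less_induct)
    case (less i)
    show ?case
    proof (cases "i = 1")
      case False
      then obtain p q where pq: "p \<in> D" "q \<in> D" "p + q = i"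
        using split pos less.prems by (metis le_neq_implies_less)
      define r where "r = max p q"
      have "r \<in> D" "r < i" "i \<le> 2 * r"
        using pq pos[of p] pos[of q] by (auto simp: r_def max_def)
      have "{x\<in>D. x < r} \<subset> {x\<in>D. x < i}"
        using \<open>r \<in> D\<close> \<open>r < i\<close> by auto
      then have "card {x\<in>D. x < r} < card {x\<in>D. x < i}"
        using fin by (intro psubset_card_mono) auto
      then have "2 * 2 ^ card {x\<in>D. x < r} \<le> (2::nat) ^ card {x\<in>D. x < i}"
        by (metis Suc_leI power_Suc power_increasing one_le_numeral)
      then show ?thesis
        using less.hyps[OF \<open>r < i\<close> \<open>r \<in> D\<close>] \<open>i \<le> 2 * r\<close> by linarith
    qed simp
  qed
  moreover have "j \<in> D" "{x\<in>D. x < j} = D - {j}"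
    using assms by (auto simp: addition_chain_def)
  ultimately show ?thesis
    using fin by (metis card_Diff_singleton)
qed

lemma addition_chain_fits_le_pow:
  assumes "addition_chain_fits N j"
  shows "j \<le> 2 ^ N"
proof -
  obtain D where D: "addition_chain D j" "card D < N"
    using assms by (auto simp: addition_chain_fits_def)
  have "j \<le> 2 ^ (card D - 1)" by (rule addition_chain_le_pow[OF D(1)])
  also have "\<dots> \<le> 2 ^ N" by (rule power_increasing) (use D(2) in auto)
  finally show ?thesis .
qed

lemma split_closed_contains_one:
  fixes D :: "nat set"
  assumes "finite D" "D \<noteq> {}" "\<And>i. i \<in> D \<Longrightarrow> 1 \<le> i"
    and split: "\<And>i. i \<in> D \<Longrightarrow> 1 < i \<Longrightarrow> \<exists>p\<in>D. \<exists>q\<in>D. p + q = i"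
  shows "1 \<in> D"
proof (rule ccontr)
  assume "1 \<notin> D"
  have "Min D \<in> D" using assms(1,2) by simp
  then have "1 < Min D" using \<open>1 \<notin> D\<close> assms(3) by (metis le_neq_implies_less)
  then obtain p q where "p \<in> D" "q \<in> D" "p + q = Min D"
    using split \<open>Min D \<in> D\<close> by blast
  then show False using Min_le[OF assms(1) \<open>p \<in> D\<close>] assms(3)[of q] by linarith
qed

section \<open>Coordinate vectors\<close>

definition coord_scale :: "'a::field \<Rightarrow> (nat \<Rightarrow> 'a) \<Rightarrow> nat \<Rightarrow> 'a" where
  "coord_scale c v = (\<lambda>k. c * v k)"

interpretation coord: vector_space "coord_scale :: 'a::field \<Rightarrow> (nat \<Rightarrow> 'a) \<Rightarrow> nat \<Rightarrow> 'a"
  by unfold_locales (auto simp: coord_scale_def fun_eq_iff algebra_simps)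

lemma sum_fun_apply: "sum f A k = (\<Sum>a\<in>A. f a k)" for f :: "'b \<Rightarrow> nat \<Rightarrow> 'c::comm_monoid_add"
  by (induct A rule: infinite_finite_induct) auto

lemma lin_span_eq_span: "lin_span X = coord.span X"
  unfolding lin_span_def coord.span_explicit
  by (auto simp: fun_eq_iff sum_fun_apply coord_scale_def)

lemma subspace_vecs: "coord.subspace (vecs n)"
  by (auto simp: coord.subspace_def vecs_def coord_scale_def)

lemma zero_in_vecs: "0 \<in> vecs n"
  and add_in_vecs: "x \<in> vecs n \<Longrightarrow> y \<in> vecs n \<Longrightarrow> x + y \<in> vecs n"
  and diff_in_vecs: "x \<in> vecs n \<Longrightarrow> y \<in> vecs n \<Longrightarrow> x - y \<in> vecs n"
  and scale_in_vecs: "x \<in> vecs n \<Longrightarrow> coord_scale c x \<in> vecs n"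
  by (simp_all add: vecs_def coord_scale_def)

definition unit_vec :: "nat \<Rightarrow> nat \<Rightarrow> 'a::field" where
  "unit_vec i = (\<lambda>k. if k = i then 1 else 0)"

lemma unit_vec_in_vecs: "i < n \<Longrightarrow> unit_vec i \<in> vecs n"
  by (auto simp: unit_vec_def vecs_def)

lemma vecs_eq_sum_unit_vec:
  assumes "x \<in> vecs n" shows "x = (\<Sum>i<n. coord_scale (x i) (unit_vec i))"
proof
  fix k show "x k = (\<Sum>i<n. coord_scale (x i) (unit_vec i)) k"
    using assms by (cases "k < n")
      (auto simp: sum_fun_apply coord_scale_def unit_vec_def vecs_def if_distrib[of "(*) _"] cong: if_cong)
qed

lemma vecs_in_subspace:
  assumes x: "x \<in> vecs n" and V: "coord.subspace V"
    and support: "\<And>i. i < n \<Longrightarrow> x i \<noteq> 0 \<Longrightarrow> unit_vec i \<in> V"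
  shows "x \<in> V"
proof -
  have "coord_scale (x i) (unit_vec i) \<in> V" if "i < n" for i
    using that support coord.subspace_scale[OF V] coord.subspace_0[OF V]
    by (cases "x i = 0") (auto simp: coord_scale_def zero_fun_def[symmetric])
  then show ?thesis
    by (subst vecs_eq_sum_unit_vec[OF x]) (auto intro: coord.subspace_sum[OF V])
qed

lemma vecs_eq_span_unit_vec: "vecs n = coord.span (unit_vec ` {..<n})"
proof
  show "vecs n \<subseteq> coord.span (unit_vec ` {..<n})"
    by (auto intro: vecs_in_subspace coord.span_base)
  show "coord.span (unit_vec ` {..<n}) \<subseteq> vecs n"
    by (rule coord.span_minimal[OF _ subspace_vecs]) (auto simp: unit_vec_in_vecs)
qed

lemma (in vector_space) independent_of_strict_chain:
  assumes sub: "\<And>k. subspace (L k)" and mono: "\<And>k. L k \<subseteq> L (Suc k)"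
    and a: "a \<in> L 0" "a \<noteq> 0"
  shows "\<exists>B. finite B \<and> independent B \<and> B \<subseteq> L i \<and>
    card B = Suc (card {k\<in>{1..i}. L k \<noteq> L (k - 1)})"
proof (induct i)
  case 0
  show ?case using a by (intro exI[of _ "{a}"]) auto
next
  case (Suc i)
  then obtain B where B: "finite B" "independent B" "B \<subseteq> L i"
    and card_B: "card B = Suc (card {k\<in>{1..i}. L k \<noteq> L (k - 1)})"
    by blast
  have B_Suc: "B \<subseteq> L (Suc i)" using B(3) mono by blast
  show ?case
  proof (cases "L (Suc i) = L i")
    case True
    then have "{k\<in>{1..Suc i}. L k \<noteq> L (k - 1)} = {k\<in>{1..i}. L k \<noteq> L (k - 1)}"
      by (auto simp: le_Suc_eq)
    then show ?thesis using B B_Suc card_B by auto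
  next
    case False
    then obtain w where w: "w \<in> L (Suc i)" "w \<notin> L i" using mono by blast
    have "w \<notin> span B" using w(2) span_minimal[OF B(3) sub] by blast
    then have "independent (insert w B)" "w \<notin> B"
      using independent_insertI[OF _ B(2)] span_base by blast+
    moreover have "{k\<in>{1..Suc i}. L k \<noteq> L (k - 1)} = insert (Suc i) {k\<in>{1..i}. L k \<noteq> L (k - 1)}"
      using False by (auto simp: le_Suc_eq)
    ultimately show ?thesis using B B_Suc card_B w(1)
      by (intro exI[of _ "insert w B"]) auto
  qed
qed

section \<open>Words and the spans \<open>L\<^sub>i\<close>\<close>

lemma Lspan_eq_span: "Lspan m u S i = coord.span {w. \<exists>k\<le>i. is_word m u S w k}"
  by (simp add: Lspan_def lin_span_eq_span)

lemma word_in_Lspan: "is_word m u S w k \<Longrightarrow> k \<le> i \<Longrightarrow> w \<in> Lspan m u S i"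
  unfolding Lspan_eq_span by (rule coord.span_base) auto

lemma subspace_Lspan: "coord.subspace (Lspan m u S i)"
  unfolding Lspan_eq_span by simp

lemma Lspan_mono: "i \<le> i' \<Longrightarrow> Lspan m u S i \<subseteq> Lspan m u S i'"
  unfolding Lspan_eq_span by (rule coord.span_mono) (auto intro: le_trans)

lemma word_length_0: assumes "is_word m u S w 0" shows "w = u"
  using assms by (rule is_word.cases) auto

definition word_span ::
  "((nat \<Rightarrow> 'a::field) \<Rightarrow> (nat \<Rightarrow> 'a) \<Rightarrow> nat \<Rightarrow> 'a) \<Rightarrow> (nat \<Rightarrow> 'a) \<Rightarrow> (nat \<Rightarrow> 'a) set \<Rightarrow>
    nat \<Rightarrow> (nat \<Rightarrow> 'a) set"
  where "word_span m u S k = coord.span {w. is_word m u S w k}"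

lemma word_span_subset_Lspan: "k \<le> i \<Longrightarrow> word_span m u S k \<subseteq> Lspan m u S i"
  unfolding word_span_def Lspan_eq_span by (rule coord.span_mono) blast

lemma span_subset_word_span_one: "coord.span S \<subseteq> word_span m u S 1"
  unfolding word_span_def by (rule coord.span_mono) (use is_word.word_gen in blast)

definition Lspan_jumps ::
  "((nat \<Rightarrow> 'a::field) \<Rightarrow> (nat \<Rightarrow> 'a) \<Rightarrow> nat \<Rightarrow> 'a) \<Rightarrow> (nat \<Rightarrow> 'a) \<Rightarrow> (nat \<Rightarrow> 'a) set \<Rightarrow>
    nat \<Rightarrow> nat set"
  where "Lspan_jumps m u S j = {i\<in>{1..j}. Lspan m u S i \<noteq> Lspan m u S (i - 1)}"

lemma new_word_at_jump:
  assumes jump: "Lspan m u S i \<noteq> Lspan m u S (i - 1)"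
  shows "\<exists>w. is_word m u S w i \<and> w \<notin> Lspan m u S (i - 1)"
proof (rule ccontr)
  assume "\<nexists>w. is_word m u S w i \<and> w \<notin> Lspan m u S (i - 1)"
  then have "w \<in> Lspan m u S (i - 1)" if "k \<le> i" "is_word m u S w k" for w k
    using that word_in_Lspan[of m u S w k "i - 1"] by (cases "k = i") auto
  then have "Lspan m u S i \<subseteq> Lspan m u S (i - 1)"
    unfolding Lspan_eq_span[of m u S i] by (intro coord.span_minimal subspace_Lspan) blast
  then show False using jump subset_antisym[OF _ Lspan_mono[of "i - 1" i m u S]] by simp
qed

locale coord_algebra =
  fixes n :: nat and m :: "(nat \<Rightarrow> 'a::field) \<Rightarrow> (nat \<Rightarrow> 'a) \<Rightarrow> nat \<Rightarrow> 'a" and u :: "nat \<Rightarrow> 'a"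
  assumes is_algebra: "is_algebra n m u"
begin

lemma unit_in_vecs: "u \<in> vecs n"
  using is_algebra by (simp add: is_algebra_def)

lemma mult_in_vecs: "x \<in> vecs n \<Longrightarrow> y \<in> vecs n \<Longrightarrow> m x y \<in> vecs n"
  using is_algebra by (simp add: is_algebra_def)

lemma mult_unit_left: "x \<in> vecs n \<Longrightarrow> m u x = x"
  and mult_unit_right: "x \<in> vecs n \<Longrightarrow> m x u = x"
  using is_algebra by (simp_all add: is_algebra_def)

lemma mult_add_left: "x \<in> vecs n \<Longrightarrow> y \<in> vecs n \<Longrightarrow> z \<in> vecs n \<Longrightarrow> m (x + y) z = m x z + m y z"
  and mult_add_right: "x \<in> vecs n \<Longrightarrow> y \<in> vecs n \<Longrightarrow> z \<in> vecs n \<Longrightarrow> m z (x + y) = m z x + m z y"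
  using is_algebra by (simp_all add: is_algebra_def plus_fun_def)

lemma mult_scale_left: "x \<in> vecs n \<Longrightarrow> y \<in> vecs n \<Longrightarrow> m (coord_scale c x) y = coord_scale c (m x y)"
  and mult_scale_right: "x \<in> vecs n \<Longrightarrow> y \<in> vecs n \<Longrightarrow> m x (coord_scale c y) = coord_scale c (m x y)"
  using is_algebra by (simp_all add: is_algebra_def coord_scale_def)

lemma mult_zero_left: "y \<in> vecs n \<Longrightarrow> m 0 y = 0"
  using mult_scale_left[OF zero_in_vecs, of y 0] by (simp add: coord_scale_def zero_fun_def)

lemma mult_zero_right: "x \<in> vecs n \<Longrightarrow> m x 0 = 0"
  using mult_scale_right[OF _ zero_in_vecs, of x 0] by (simp add: coord_scale_def zero_fun_def)

lemma mult_diff_left: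
  assumes "x \<in> vecs n" "y \<in> vecs n" "z \<in> vecs n"
  shows "m (x - y) z = m x z - m y z"
proof -
  have "x - y \<in> vecs n" using assms(1,2) by (rule diff_in_vecs)
  then show ?thesis using mult_add_left[of "x - y" y z] assms by (simp add: eq_diff_eq)
qed

lemma mult_diff_right:
  assumes "x \<in> vecs n" "y \<in> vecs n" "z \<in> vecs n"
  shows "m z (x - y) = m z x - m z y"
proof -
  have "x - y \<in> vecs n" using assms(1,2) by (rule diff_in_vecs)
  then show ?thesis using mult_add_right[of "x - y" y z] assms by (simp add: eq_diff_eq)
qed

lemma subspace_mult_left_preimage:
  assumes y: "y \<in> vecs n" and Z: "coord.subspace Z"
  shows "coord.subspace {x \<in> vecs n. m x y \<in> Z}"
proof (rule coord.subspaceI)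
  show "0 \<in> {x \<in> vecs n. m x y \<in> Z}"
    using zero_in_vecs mult_zero_left[OF y] coord.subspace_0[OF Z] by simp
next
  fix x x' assume "x \<in> {x \<in> vecs n. m x y \<in> Z}" "x' \<in> {x \<in> vecs n. m x y \<in> Z}"
  then show "x + x' \<in> {x \<in> vecs n. m x y \<in> Z}"
    using mult_add_left[OF _ _ y] coord.subspace_add[OF Z] by (simp add: add_in_vecs)
next
  fix c x assume "x \<in> {x \<in> vecs n. m x y \<in> Z}"
  then show "coord_scale c x \<in> {x \<in> vecs n. m x y \<in> Z}"
    using mult_scale_left[OF _ y] coord.subspace_scale[OF Z] by (simp add: scale_in_vecs)
qed

lemma subspace_mult_right_preimage:
  assumes x: "x \<in> vecs n" and Z: "coord.subspace Z"
  shows "coord.subspace {y \<in> vecs n. m x y \<in> Z}"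
proof (rule coord.subspaceI)
  show "0 \<in> {y \<in> vecs n. m x y \<in> Z}"
    using zero_in_vecs mult_zero_right[OF x] coord.subspace_0[OF Z] by simp
next
  fix y y' assume "y \<in> {y \<in> vecs n. m x y \<in> Z}" "y' \<in> {y \<in> vecs n. m x y \<in> Z}"
  then show "y + y' \<in> {y \<in> vecs n. m x y \<in> Z}"
    using mult_add_right[OF _ _ x] coord.subspace_add[OF Z] by (simp add: add_in_vecs)
next
  fix c y assume "y \<in> {y \<in> vecs n. m x y \<in> Z}"
  then show "coord_scale c y \<in> {y \<in> vecs n. m x y \<in> Z}"
    using mult_scale_right[OF x] coord.subspace_scale[OF Z] by (simp add: scale_in_vecs)
qed

lemma mult_span_in_subspace:
  assumes a: "a \<in> coord.span X" and b: "b \<in> coord.span Y" and X: "X \<subseteq> vecs n" and Y: "Y \<subseteq> vecs n"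
    and Z: "coord.subspace Z" and XY: "\<And>x y. x \<in> X \<Longrightarrow> y \<in> Y \<Longrightarrow> m x y \<in> Z"
  shows "m a b \<in> Z"
proof -
  have b_right: "m x b \<in> Z" if x: "x \<in> X" for x
  proof -
    have "Y \<subseteq> {y \<in> vecs n. m x y \<in> Z}" using Y XY[OF x] by blast
    then have "coord.span Y \<subseteq> {y \<in> vecs n. m x y \<in> Z}"
      using x X by (intro coord.span_minimal subspace_mult_right_preimage Z) auto
    then show ?thesis using b by blast
  qed
  have "b \<in> vecs n" using b coord.span_minimal[OF Y subspace_vecs] by blast
  have "X \<subseteq> {x \<in> vecs n. m x b \<in> Z}" using X b_right by blast
  then have "coord.span X \<subseteq> {x \<in> vecs n. m x b \<in> Z}"
    by (intro coord.span_minimal subspace_mult_left_preimage \<open>b \<in> vecs n\<close> Z)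
  then show ?thesis using a by blast
qed

lemma word_in_vecs: "is_word m u S w k \<Longrightarrow> S \<subseteq> vecs n \<Longrightarrow> w \<in> vecs n"
  by (induct rule: is_word.induct) (auto simp: unit_in_vecs mult_in_vecs)

lemma words_subset_vecs: "S \<subseteq> vecs n \<Longrightarrow> {w. \<exists>k\<le>i. is_word m u S w k} \<subseteq> vecs n"
  using word_in_vecs by blast

lemma Lspan_subset_vecs: "S \<subseteq> vecs n \<Longrightarrow> Lspan m u S i \<subseteq> vecs n"
  unfolding Lspan_eq_span by (rule coord.span_minimal[OF words_subset_vecs subspace_vecs])

lemma mult_Lspan:
  assumes S: "S \<subseteq> vecs n" and "a \<in> Lspan m u S p" "b \<in> Lspan m u S q"
  shows "m a b \<in> Lspan m u S (p + q)"
proof (rule mult_span_in_subspace[OF assms(2,3)[unfolded Lspan_eq_span]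
      words_subset_vecs[OF S] words_subset_vecs[OF S] subspace_Lspan])
  fix x y assume "x \<in> {w. \<exists>k\<le>p. is_word m u S w k}" "y \<in> {w. \<exists>k\<le>q. is_word m u S w k}"
  then obtain k k' where x: "k \<le> p" "is_word m u S x k" and y: "k' \<le> q" "is_word m u S y k'"
    by auto
  consider "k = 0" | "k' = 0" | "1 \<le> k" "1 \<le> k'" by linarith
  then show "m x y \<in> Lspan m u S (p + q)"
  proof cases
    case 1
    then have "m x y = y"
      using x(2) word_length_0 mult_unit_left[OF word_in_vecs[OF y(2) S]] by blast
    then show ?thesis using word_in_Lspan[OF y(2), of "p + q"] y(1) by simp
  next
    case 2
    then have "m x y = x"
      using y(2) word_length_0 mult_unit_right[OF word_in_vecs[OF x(2) S]] by blast
    then show ?thesis using word_in_Lspan[OF x(2), of "p + q"] x(1) by simp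
  next
    case 3
    then have "is_word m u S (m x y) (k + k')"
      using x(2) y(2) by (intro is_word.word_mult)
    then show ?thesis by (rule word_in_Lspan) (use x(1) y(1) in simp)
  qed
qed

lemma mult_word_span:
  assumes S: "S \<subseteq> vecs n" and "1 \<le> p" "1 \<le> q"
    and x: "x \<in> word_span m u S p" and y: "y \<in> word_span m u S q"
  shows "m x y \<in> word_span m u S (p + q)"
proof -
  have words: "{w. is_word m u S w k} \<subseteq> vecs n" for k using word_in_vecs[OF _ S] by blast
  show ?thesis
    using x y unfolding word_span_def
  proof (rule mult_span_in_subspace[OF _ _ words words coord.subspace_span])
    fix x' y' assume "x' \<in> {w. is_word m u S w p}" "y' \<in> {w. is_word m u S w q}"
    then have "is_word m u S (m x' y') (p + q)"
      using assms(2,3) by (intro is_word.word_mult) auto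
    then show "m x' y' \<in> coord.span {w. is_word m u S w (p + q)}" by (intro coord.span_base) simp
  qed
qed

lemma unit_minus_scale_in_Lspan_one:
  assumes "t \<in> S"
  shows "t - coord_scale c u \<in> Lspan m u S 1"
proof -
  have t: "t \<in> Lspan m u S 1" by (rule word_in_Lspan[OF is_word.word_gen[OF assms]]) simp
  have u: "u \<in> Lspan m u S 1" by (rule word_in_Lspan[OF is_word.word_unit]) simp
  show ?thesis by (rule coord.subspace_diff[OF subspace_Lspan t coord.subspace_scale[OF subspace_Lspan u]])
qed

lemma generates_subset_subalgebra:
  assumes gen: "generates n m u S" and Q: "coord.subspace Q" "u \<in> Q" "S \<subseteq> Q"
    and mult_Q: "\<And>x y. x \<in> Q \<Longrightarrow> y \<in> Q \<Longrightarrow> m x y \<in> Q"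
  shows "vecs n \<subseteq> Q"
proof -
  obtain k where "Lspan m u S k = vecs n" using gen by (auto simp: generates_def)
  moreover have "w \<in> Q" if "is_word m u S w i" for w i
    using that by induct (use Q mult_Q in auto)
  then have "Lspan m u S k \<subseteq> Q"
    unfolding Lspan_eq_span by (intro coord.span_minimal Q(1)) blast
  ultimately show ?thesis by simp
qed

lemma Lspan_subset_of_generators:
  assumes S: "S \<subseteq> vecs n" and T: "T \<subseteq> Lspan m u S 1"
  shows "Lspan m u T i \<subseteq> Lspan m u S i"
proof -
  have "w \<in> Lspan m u S k" if "is_word m u T w k" for w k
    using that
  proof induct
    case word_unit
    show ?case by (rule word_in_Lspan[OF is_word.word_unit]) simp
  next
    case (word_gen s)
    then show ?case using T by blast
  next
    case (word_mult a p b q)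
    then show ?case using mult_Lspan[OF S] by blast
  qed
  then show ?thesis
    unfolding Lspan_eq_span[of m u T] using Lspan_mono[of _ i m u S]
    by (intro coord.span_minimal subspace_Lspan) blast
qed

lemma Lspan_jump_split:
  assumes S: "S \<subseteq> vecs n" and i: "i \<in> Lspan_jumps m u S j" "1 < i"
  shows "\<exists>p\<in>Lspan_jumps m u S j. \<exists>q\<in>Lspan_jumps m u S j. p + q = i"
proof -
  let ?L = "Lspan m u S"
  have "i \<le> j" "?L i \<noteq> ?L (i - 1)" using i(1) by (auto simp: Lspan_jumps_def)
  then obtain w where w: "is_word m u S w i" "w \<notin> ?L (i - 1)"
    using new_word_at_jump by blast
  from w(1) i(2) obtain a b p q where ab: "w = m a b" "is_word m u S a p" "is_word m u S b q"
    "1 \<le> p" "1 \<le> q" "p + q = i"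
    by (cases rule: is_word.cases) auto
  have "?L p \<noteq> ?L (p - 1)"
  proof
    assume "?L p = ?L (p - 1)"
    then have "a \<in> ?L (p - 1)" using word_in_Lspan[OF ab(2)] by auto
    then have "w \<in> ?L (p - 1 + q)"
      using mult_Lspan[OF S _ word_in_Lspan[OF ab(3) order_refl]] ab(1) by blast
    then show False using w(2) ab by simp
  qed
  moreover have "?L q \<noteq> ?L (q - 1)"
  proof
    assume "?L q = ?L (q - 1)"
    then have "b \<in> ?L (q - 1)" using word_in_Lspan[OF ab(3)] by auto
    then have "w \<in> ?L (p + (q - 1))"
      using mult_Lspan[OF S word_in_Lspan[OF ab(2) order_refl]] ab(1) by blast
    then show False using w(2) ab by simp
  qed
  ultimately show ?thesis
    using ab \<open>i \<le> j\<close> by (intro bexI[of _ p] bexI[of _ q]) (auto simp: Lspan_jumps_def)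
qed

lemma vecs_trivial_if_unit_zero:
  assumes "u = 0"
  shows "vecs n \<subseteq> {0 :: nat \<Rightarrow> 'a}"
proof
  fix x :: "nat \<Rightarrow> 'a" assume "x \<in> vecs n"
  then have "x = m u x" "m 0 x = 0" using mult_unit_left mult_zero_left by simp_all
  then show "x \<in> {0}" using assms by simp
qed

lemma card_Lspan_jumps_less:
  assumes full: "Lspan m u S j = vecs n" and "u \<noteq> 0"
  shows "card (Lspan_jumps m u S j) < n"
proof -
  have "\<exists>B. finite B \<and> coord.independent B \<and> B \<subseteq> Lspan m u S j \<and>
      card B = Suc (card (Lspan_jumps m u S j))"
    unfolding Lspan_jumps_def
    by (rule coord.independent_of_strict_chain[of "Lspan m u S" u])
      (simp_all add: subspace_Lspan Lspan_mono word_in_Lspan[OF is_word.word_unit] \<open>u \<noteq> 0\<close>)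
  then obtain B where B: "coord.independent B" "B \<subseteq> Lspan m u S j"
    "card B = Suc (card (Lspan_jumps m u S j))"
    by blast
  have "B \<subseteq> coord.span (unit_vec ` {..<n})" using B(2) full by (simp add: vecs_eq_span_unit_vec)
  then have "card B \<le> card (unit_vec ` {..<n} :: (nat \<Rightarrow> 'a) set)"
    using coord.independent_span_bound[OF _ B(1)] by simp
  also have "\<dots> \<le> n" using card_image_le[of "{..<n}" unit_vec] by simp
  finally show ?thesis using B(3) by simp
qed

lemma addition_chain_fits_of_generates:
  assumes gen: "generates n m u S" and len: "gen_length n m u S = j" and j: "1 \<le> j"
  shows "addition_chain_fits n j"
proof -
  let ?L = "Lspan m u S" and ?D = "Lspan_jumps m u S j"
  have S: "S \<subseteq> vecs n" and full: "\<exists>k. ?L k = vecs n"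
    using gen by (auto simp: generates_def)
  have L_j: "?L j = vecs n"
    using LeastI_ex[OF full] len by (simp add: gen_length_def)
  have L_below: "?L (j - 1) \<noteq> vecs n"
    using not_less_Least[of "j - 1" "\<lambda>k. ?L k = vecs n"] len j by (simp add: gen_length_def)
  have D: "finite ?D" "j \<in> ?D" "?D \<subseteq> {1..j}"
    using j L_j L_below by (auto simp: Lspan_jumps_def)
  have pos: "\<And>i. i \<in> ?D \<Longrightarrow> 1 \<le> i" using D by auto
  have "?D \<noteq> {}" using D by auto
  then have "1 \<in> ?D" by (rule split_closed_contains_one[OF D(1) _ pos Lspan_jump_split[OF S]])
  moreover have "\<forall>i\<in>?D. 1 < i \<longrightarrow> (\<exists>p\<in>?D. \<exists>q\<in>?D. p + q = i)"
    using Lspan_jump_split[OF S] by blast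
  ultimately have "addition_chain ?D j" using D by (simp add: addition_chain_def)
  moreover have "u \<noteq> 0"
  proof
    assume "u = 0"
    moreover have "0 \<in> ?L (j - 1)" by (rule coord.subspace_0[OF subspace_Lspan])
    ultimately show False using vecs_trivial_if_unit_zero L_below Lspan_subset_vecs[OF S] by auto
  qed
  then have "card ?D < n" by (rule card_Lspan_jumps_less[OF L_j])
  ultimately show ?thesis by (auto simp: addition_chain_fits_def)
qed

end

section \<open>Graded table algebras\<close>

text \<open>The product of basis vectors is \<open>e\<^sub>a e\<^sub>b = e\<^bsub>tab a b\<^esub>\<close>, where an index
  \<open>tab a b \<ge> n\<close> stands for the product \<open>0\<close>.\<close>

definition table_mult :: "nat \<Rightarrow> (nat \<Rightarrow> nat \<Rightarrow> nat) \<Rightarrow> (nat \<Rightarrow> 'a::field) \<Rightarrow> (nat \<Rightarrow> 'a) \<Rightarrow> nat \<Rightarrow> 'a"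
  where "table_mult n tab x y =
    (\<lambda>k. if k < n then (\<Sum>a<n. \<Sum>b<n. of_bool (tab a b = k) * (x a * y b)) else 0)"

lemma sum_unit_vec_mult: "a < n \<Longrightarrow> (\<Sum>i<n. unit_vec a i * f i) = (f a :: 'a::field)"
  by (simp add: unit_vec_def if_distrib[of "\<lambda>x. x * _"] cong: if_cong)

lemma sum_mult_unit_vec: "a < n \<Longrightarrow> (\<Sum>i<n. f i * unit_vec a i) = (f a :: 'a::field)"
  using sum_unit_vec_mult[of a n f] by (simp add: mult.commute)

lemma table_mult_unit_vec_left:
  assumes "a < n"
  shows "table_mult n tab (unit_vec a) y = (\<lambda>k. if k < n then \<Sum>b<n. of_bool (tab a b = k) * y b else 0)"
proof -
  have "(\<Sum>a'<n. \<Sum>b<n. of_bool (tab a' b = k) * (unit_vec a a' * y b)) =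
      (\<Sum>a'<n. unit_vec a a' * (\<Sum>b<n. of_bool (tab a' b = k) * y b))" for k
    unfolding sum_distrib_left by (intro sum.cong refl) (rule mult.left_commute)
  then show ?thesis using assms by (simp only: table_mult_def sum_unit_vec_mult)
qed

lemma table_mult_unit_vec_right:
  assumes "b < n"
  shows "table_mult n tab x (unit_vec b) = (\<lambda>k. if k < n then \<Sum>a<n. of_bool (tab a b = k) * x a else 0)"
proof -
  have "(\<Sum>a<n. \<Sum>b'<n. of_bool (tab a b' = k) * (x a * unit_vec b b')) =
      (\<Sum>a<n. of_bool (tab a b = k) * x a)" for k
    by (intro sum.cong refl) (simp only: mult.assoc[symmetric] sum_mult_unit_vec[OF assms])
  then show ?thesis by (simp only: table_mult_def)
qed

lemma table_mult_unit_vec: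
  assumes "a < n" "b < n"
  shows "table_mult n tab (unit_vec a) (unit_vec b) = (if tab a b < n then unit_vec (tab a b) else 0)"
proof -
  have "table_mult n tab (unit_vec a) (unit_vec b) = (\<lambda>k. if k < n then of_bool (tab a b = k) else 0)"
    by (simp only: table_mult_unit_vec_left[OF assms(1)] sum_mult_unit_vec[OF assms(2)])
  also have "\<dots> = (if tab a b < n then unit_vec (tab a b) else 0)"
    by (auto simp: fun_eq_iff unit_vec_def)
  finally show ?thesis .
qed

lemma table_mult_unit_left:
  assumes "0 < n" "\<And>b. b < n \<Longrightarrow> tab 0 b = b" "x \<in> vecs n"
  shows "table_mult n tab (unit_vec 0) x = x"
proof
  fix k
  have "(\<Sum>b<n. of_bool (tab 0 b = k) * x b) = (\<Sum>b<n. x b * unit_vec k b)"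
    using assms(2) by (intro sum.cong) (auto simp: unit_vec_def)
  then show "table_mult n tab (unit_vec 0) x k = x k"
    using assms(3) sum_mult_unit_vec[of k n x]
    by (simp add: table_mult_unit_vec_left[OF assms(1)] vecs_def del: sum_mult_of_bool_eq sum_of_bool_mult_eq)
qed

lemma table_mult_unit_right:
  assumes "0 < n" "\<And>a. a < n \<Longrightarrow> tab a 0 = a" "x \<in> vecs n"
  shows "table_mult n tab x (unit_vec 0) = x"
proof
  fix k
  have "(\<Sum>a<n. of_bool (tab a 0 = k) * x a) = (\<Sum>a<n. x a * unit_vec k a)"
    using assms(2) by (intro sum.cong) (auto simp: unit_vec_def)
  then show "table_mult n tab x (unit_vec 0) k = x k"
    using assms(3) sum_mult_unit_vec[of k n x]
    by (simp add: table_mult_unit_vec_right[OF assms(1)] vecs_def del: sum_mult_of_bool_eq sum_of_bool_mult_eq)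
qed

lemma is_algebra_table_mult:
  assumes "0 < n" "\<And>b. b < n \<Longrightarrow> tab 0 b = b" "\<And>a. a < n \<Longrightarrow> tab a 0 = a"
  shows "is_algebra n (table_mult n tab) (unit_vec 0)"
  unfolding is_algebra_def
proof (intro conjI ballI allI)
  show "unit_vec 0 \<in> vecs n" using assms(1) by (rule unit_vec_in_vecs)
  show "table_mult n tab x y \<in> vecs n" for x y :: "nat \<Rightarrow> 'a"
    by (simp add: table_mult_def vecs_def)
  show "table_mult n tab (unit_vec 0) x = x" "table_mult n tab x (unit_vec 0) = x"
    if "x \<in> vecs n" for x :: "nat \<Rightarrow> 'a"
    using table_mult_unit_left[of n tab, OF assms(1,2) that]
      table_mult_unit_right[of n tab, OF assms(1,3) that] by simp_all
qed (simp_all add: table_mult_def fun_eq_iff distrib_left distrib_right sum.distrib sum_distrib_left ac_simps)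

definition degree_ge :: "nat \<Rightarrow> (nat \<Rightarrow> nat) \<Rightarrow> nat \<Rightarrow> (nat \<Rightarrow> 'a::field) set" where
  "degree_ge n f d = {x \<in> vecs n. \<forall>i<n. f i < d \<longrightarrow> x i = 0}"

lemma subspace_degree_ge: "coord.subspace (degree_ge n f d)"
  by (auto simp: coord.subspace_def degree_ge_def vecs_def coord_scale_def)

lemma degree_ge_subset_vecs: "degree_ge n f d \<subseteq> vecs n"
  by (auto simp: degree_ge_def)

lemma degree_ge_antimono: "d \<le> d' \<Longrightarrow> degree_ge n f d' \<subseteq> degree_ge n f d"
  by (auto simp: degree_ge_def)

lemma unit_vec_in_degree_ge: "c < n \<Longrightarrow> unit_vec c \<in> degree_ge n f (f c)"
  by (auto simp: degree_ge_def unit_vec_def vecs_def)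

text \<open>Removing its unit component puts a generator into positive degree and keeps it in
  \<open>L\<^sub>1\<close>.\<close>

definition nonunit_part :: "(nat \<Rightarrow> 'a::field) \<Rightarrow> nat \<Rightarrow> 'a" where
  "nonunit_part x = x - coord_scale (x 0) (unit_vec 0)"

lemma in_span_unit_nonunit_part: "t \<in> T \<Longrightarrow> t \<in> coord.span (insert (unit_vec 0) (nonunit_part ` T))"
proof -
  assume "t \<in> T"
  then have "nonunit_part t + coord_scale (t 0) (unit_vec 0) \<in> coord.span (insert (unit_vec 0) (nonunit_part ` T))"
    by (intro coord.span_add coord.span_scale coord.span_base) auto
  then show ?thesis by (simp add: nonunit_part_def)
qed

text \<open>\<open>f i\<close> is the degree of the basis vector \<open>e\<^sub>i\<close>, and \<open>e\<^sub>0\<close> is the unit.\<close>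

locale graded_table =
  fixes n :: nat and tab :: "nat \<Rightarrow> nat \<Rightarrow> nat" and f :: "nat \<Rightarrow> nat" and j :: nat
  assumes j_pos: "1 \<le> j"
    and tab_0_left: "\<And>b. b < n \<Longrightarrow> tab 0 b = b"
    and tab_0_right: "\<And>a. a < n \<Longrightarrow> tab a 0 = a"
    and degree_0: "f 0 = 0"
    and degree_range: "\<And>i. 0 < i \<Longrightarrow> i < n \<Longrightarrow> 1 \<le> f i \<and> f i \<le> j"
    and degree_tab: "\<And>a b. a < n \<Longrightarrow> b < n \<Longrightarrow> tab a b < n \<Longrightarrow> f (tab a b) = f a + f b"
    and degree_split: "\<And>c. c < n \<Longrightarrow> 2 \<le> f c \<Longrightarrow> \<exists>a<n. \<exists>b<n. tab a b = c \<and> 1 \<le> f a \<and> 1 \<le> f b"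
    and degree_top: "\<exists>c<n. f c = j"
begin

abbreviation tmult :: "(nat \<Rightarrow> 'a::field) \<Rightarrow> (nat \<Rightarrow> 'a) \<Rightarrow> nat \<Rightarrow> 'a" where
  "tmult \<equiv> table_mult n tab"

lemma n_pos: "0 < n"
  using degree_top by auto

lemma coord_algebra: "coord_algebra n (tmult :: (nat \<Rightarrow> 'a::field) \<Rightarrow> _) (unit_vec 0)"
  by (rule coord_algebra.intro, rule is_algebra_table_mult[OF n_pos tab_0_left tab_0_right])

lemma tmult_degree_ge:
  assumes x: "x \<in> degree_ge n f p" and y: "y \<in> degree_ge n f q"
  shows "tmult x y \<in> degree_ge n f (p + q)"
  unfolding degree_ge_def
proof (intro CollectI conjI allI impI)
  show "tmult x y \<in> vecs n" by (simp add: table_mult_def vecs_def)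
  fix k assume k: "k < n" "f k < p + q"
  have "of_bool (tab a b = k) * (x a * y b) = 0" if "a < n" "b < n" for a b
  proof (cases "tab a b = k")
    case True
    then have "f a < p \<or> f b < q" using degree_tab[OF that] k by auto
    then show ?thesis using x y that by (auto simp: degree_ge_def)
  qed simp
  then have "(\<Sum>a<n. \<Sum>b<n. of_bool (tab a b = k) * (x a * y b)) = 0"
    by (intro sum.neutral ballI) simp
  then show "tmult x y k = 0" by (simp add: table_mult_def)
qed

lemma degree_one_words:
  assumes "is_word tmult (unit_vec 0) (unit_vec ` {c. c < n \<and> f c = 1}) w k"
  shows "w = (0 :: nat \<Rightarrow> 'a::field) \<or> (\<exists>c<n. f c = k \<and> w = unit_vec c)"
  using assms
proof induct
  case word_unit
  then show ?case using n_pos degree_0 by auto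
next
  case (word_gen s)
  then show ?case by auto
next
  case (word_mult a p b q)
  show ?case
  proof (cases "a = 0 \<or> b = 0")
    case True
    then show ?thesis by (auto simp: table_mult_def fun_eq_iff)
  next
    case False
    then obtain c c' where "c < n" "f c = p" "a = unit_vec c" "c' < n" "f c' = q" "b = unit_vec c'"
      using word_mult by auto
    then show ?thesis
      using table_mult_unit_vec[of c n c' tab] degree_tab[of c c'] by (cases "tab c c' < n") auto
  qed
qed

lemma unit_vec_is_word:
  assumes "c < n"
  shows "is_word tmult (unit_vec 0) (unit_vec ` {c. c < n \<and> f c = 1}) (unit_vec c :: nat \<Rightarrow> 'a::field) (f c)"
  using assms
proof (induct "f c" arbitrary: c rule: less_induct)
  case less
  consider "f c = 0" | "f c = 1" | "2 \<le> f c" by linarith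
  then show ?case
  proof cases
    case 1
    then have "c = 0" using degree_range[of c] less.prems by (cases "c = 0") auto
    then show ?thesis using 1 is_word.word_unit by simp
  next
    case 2
    then have "unit_vec c \<in> unit_vec ` {c. c < n \<and> f c = 1}" using less.prems by blast
    from is_word.word_gen[OF this] show ?thesis using 2 by simp
  next
    case 3
    then obtain a b where ab: "a < n" "b < n" "tab a b = c" "1 \<le> f a" "1 \<le> f b"
      using degree_split less.prems by blast
    then have "f c = f a + f b" using degree_tab less.prems by blast
    moreover have "tmult (unit_vec a) (unit_vec b) = (unit_vec c :: nat \<Rightarrow> 'a)"
      using table_mult_unit_vec[OF ab(1,2), of tab, where 'a = 'a] ab(3) less.prems by simp
    ultimately show ?thesis
      using is_word.word_mult[OF less.hyps[OF _ ab(1)] less.hyps[OF _ ab(2)] ab(4,5)] ab(4,5) by simp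
  qed
qed

lemma degree_one_generators_length:
  defines "S \<equiv> unit_vec ` {c. c < n \<and> f c = 1} :: (nat \<Rightarrow> 'a::field) set"
  shows "generates n tmult (unit_vec 0) S \<and> gen_length n tmult (unit_vec 0) S = j"
proof -
  interpret coord_algebra n "tmult :: (nat \<Rightarrow> 'a) \<Rightarrow> _" "unit_vec 0"
    by (rule coord_algebra)
  let ?L = "Lspan tmult (unit_vec 0) S"
  have S: "S \<subseteq> vecs n" by (auto simp: S_def unit_vec_in_vecs)
  have L_j: "?L j = vecs n"
  proof
    show "?L j \<subseteq> vecs n" by (rule Lspan_subset_vecs[OF S])
    have "unit_vec c \<in> ?L j" if "c < n" for c
      using word_in_Lspan[OF unit_vec_is_word[OF that]] degree_range[of c] degree_0 that
      unfolding S_def by (cases "c = 0") auto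
    then show "vecs n \<subseteq> ?L j" by (auto intro: vecs_in_subspace subspace_Lspan)
  qed
  obtain c where c: "c < n" "f c = j" using degree_top by blast
  have "?L (j - 1) \<subseteq> {x. x c = 0}"
    unfolding Lspan_eq_span
  proof (rule coord.span_minimal)
    show "coord.subspace {x :: nat \<Rightarrow> 'a. x c = 0}" by (auto simp: coord.subspace_def coord_scale_def)
    show "{w. \<exists>k\<le>j - 1. is_word tmult (unit_vec 0) S w k} \<subseteq> {x. x c = 0}"
      using degree_one_words[where 'a = 'a] c j_pos unfolding S_def by (fastforce simp: unit_vec_def)
  qed
  then have L_below: "?L (j - 1) \<noteq> vecs n"
    using unit_vec_in_vecs[OF c(1)] by (auto simp: unit_vec_def)
  have "?L k \<noteq> vecs n" if "k < j" for k
    using L_below Lspan_mono[of k "j - 1" tmult "unit_vec 0" S] Lspan_subset_vecs[OF S, of "j - 1"] that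
    by auto
  then have "gen_length n tmult (unit_vec 0) S = j"
    unfolding gen_length_def using L_j by (intro Least_equality) (auto simp: not_less[symmetric])
  then show ?thesis using S L_j by (auto simp: generates_def S_def)
qed

lemma nonunit_part_in_degree_ge:
  assumes "x \<in> vecs n"
  shows "nonunit_part x \<in> degree_ge n f 1"
proof -
  have "i = 0" if "i < n" "f i < 1" for i
    using that degree_range[of i] by (cases "i = 0") auto
  then show ?thesis
    using assms by (auto simp: degree_ge_def nonunit_part_def vecs_def coord_scale_def unit_vec_def)
qed

lemma word_span_subset_degree_ge:
  assumes S: "S \<subseteq> degree_ge n f 1"
  shows "word_span tmult (unit_vec 0) S k \<subseteq> degree_ge n f k"
proof -
  have "w \<in> degree_ge n f k" if "is_word tmult (unit_vec 0) S w k" for w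
    using that
  proof induct
    case word_unit
    show ?case using unit_vec_in_degree_ge[OF n_pos, of f] by (simp add: degree_0)
  next
    case (word_gen s)
    then show ?case using S by blast
  next
    case (word_mult a p b q)
    then show ?case using tmult_degree_ge by blast
  qed
  then show ?thesis
    unfolding word_span_def by (intro coord.span_minimal subspace_degree_ge) blast
qed

lemma subalgebra_unit_degree_two:
  assumes S: "S \<subseteq> degree_ge n f 1"
    and y: "y \<in> coord.span (insert (unit_vec 0) (S \<union> degree_ge n f 2))"
    and z: "z \<in> coord.span (insert (unit_vec 0) (S \<union> degree_ge n f 2))"
  shows "tmult y z \<in> coord.span (insert (unit_vec 0) (S \<union> degree_ge n f (2 :: nat)))"
proof -
  interpret coord_algebra n "tmult :: (nat \<Rightarrow> 'a::field) \<Rightarrow> _" "unit_vec 0"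
    by (rule coord_algebra)
  define X :: "(nat \<Rightarrow> 'a) set" where "X = insert (unit_vec 0) (S \<union> degree_ge n f 2)"
  have G2_G1: "degree_ge n f 2 \<subseteq> (degree_ge n f 1 :: (nat \<Rightarrow> 'a) set)"
    by (rule degree_ge_antimono) simp
  have X: "X \<subseteq> vecs n"
    using S G2_G1 degree_ge_subset_vecs[of n f 1, where 'a = 'a] unit_vec_in_vecs[OF n_pos]
    unfolding X_def by blast
  show ?thesis
    unfolding X_def[symmetric]
  proof (rule mult_span_in_subspace[OF y[folded X_def] z[folded X_def] X X coord.subspace_span])
    fix y0 z0 assume "y0 \<in> X" "z0 \<in> X"
    consider "y0 = unit_vec 0" | "z0 = unit_vec 0" | "y0 \<in> degree_ge n f 1" "z0 \<in> degree_ge n f 1"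
      using \<open>y0 \<in> X\<close> \<open>z0 \<in> X\<close> S G2_G1 unfolding X_def by blast
    then show "tmult y0 z0 \<in> coord.span X"
    proof cases
      case 1
      then show ?thesis using \<open>z0 \<in> X\<close> X mult_unit_left[of z0] coord.span_base[of z0 X] by auto
    next
      case 2
      then show ?thesis using \<open>y0 \<in> X\<close> X mult_unit_right[of y0] coord.span_base[of y0 X] by auto
    next
      case 3
      then have "tmult y0 z0 \<in> degree_ge n f 2"
        using tmult_degree_ge[OF 3] by (simp add: numeral_2_eq_2)
      then show ?thesis by (auto simp: X_def intro: coord.span_base)
    qed
  qed
qed

lemma degree_one_decomp:
  assumes gen: "generates n tmult (unit_vec 0) T" and x: "x \<in> degree_ge n f 1"
  shows "\<exists>s\<in>coord.span (nonunit_part ` T). x - s \<in> degree_ge n f 2"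
proof -
  interpret coord_algebra n "tmult :: (nat \<Rightarrow> 'a::field) \<Rightarrow> _" "unit_vec 0"
    by (rule coord_algebra)
  let ?S = "nonunit_part ` T"
  have S: "?S \<subseteq> degree_ge n f 1"
    using gen nonunit_part_in_degree_ge by (auto simp: generates_def)
  have "vecs n \<subseteq> coord.span (insert (unit_vec 0) (?S \<union> degree_ge n f 2))"
    by (rule generates_subset_subalgebra[OF gen coord.subspace_span])
      (auto intro: coord.span_base subalgebra_unit_degree_two[OF S]
        coord.span_mono[THEN subsetD, OF _ in_span_unit_nonunit_part])
  then have "x \<in> coord.span (insert (unit_vec 0) (?S \<union> degree_ge n f 2))"
    using x degree_ge_subset_vecs[of n f 1, where 'a = 'a] by blast
  then obtain c s r where sr: "s \<in> coord.span ?S" "r \<in> degree_ge n f 2"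
    "x - coord_scale c (unit_vec 0) = s + r"
    unfolding coord.span_insert coord.span_Un coord.span_eq_iff[THEN iffD2, OF subspace_degree_ge]
    by blast
  have "s \<in> degree_ge n f 1" using coord.span_minimal[OF S subspace_degree_ge] sr(1) by blast
  then have "s 0 = 0" "r 0 = 0" "x 0 = 0"
    using sr(2) x n_pos degree_0 by (auto simp: degree_ge_def)
  then have "c = 0" using fun_cong[OF sr(3), of 0] by (simp add: coord_scale_def unit_vec_def)
  then have "x - s = r" using sr(3) by (simp add: coord_scale_def algebra_simps zero_fun_def[symmetric])
  then show ?thesis using sr by auto
qed

lemma mult_approx:
  assumes S: "S \<subseteq> degree_ge n f 1" and pq: "1 \<le> p" "1 \<le> q"
    and x: "x \<in> word_span tmult (unit_vec 0) S p" "a - x \<in> degree_ge n f (p + 1)"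
    and y: "y \<in> word_span tmult (unit_vec 0) S q" "b - y \<in> degree_ge n f (q + 1)"
  shows "tmult x y \<in> word_span tmult (unit_vec 0) S (p + q)"
    and "tmult a b - tmult x y \<in> degree_ge n f (p + q + 1)"
proof -
  interpret coord_algebra n "tmult :: (nat \<Rightarrow> 'a::field) \<Rightarrow> _" "unit_vec 0"
    by (rule coord_algebra)
  have S_vecs: "S \<subseteq> vecs n" using S degree_ge_subset_vecs by blast
  show "tmult x y \<in> word_span tmult (unit_vec 0) S (p + q)"
    by (rule mult_word_span[OF S_vecs pq x(1) y(1)])
  have x_p: "x \<in> degree_ge n f p" and y_q: "y \<in> degree_ge n f q"
    using x(1) y(1) word_span_subset_degree_ge[OF S] by blast+
  have "b - y \<in> degree_ge n f q" using y(2) degree_ge_antimono[of q "q + 1"] by auto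
  then have b_q: "b \<in> degree_ge n f q" using coord.subspace_add[OF subspace_degree_ge _ y_q] by fastforce
  have "a - x \<in> vecs n" "x \<in> vecs n" "b \<in> vecs n" "y \<in> vecs n"
    using x(2) x_p b_q y_q degree_ge_subset_vecs by blast+
  then have "tmult a b - tmult x y = tmult (a - x) b + tmult x (b - y)"
    using mult_diff_left[of a x b] mult_diff_right[of b y x] add_in_vecs[of "a - x" n x] by simp
  moreover have "tmult (a - x) b \<in> degree_ge n f (p + q + 1)"
    using tmult_degree_ge[OF x(2) b_q] by (simp add: ac_simps)
  moreover have "tmult x (b - y) \<in> degree_ge n f (p + q + 1)"
    using tmult_degree_ge[OF x_p y(2)] by (simp add: ac_simps)
  ultimately show "tmult a b - tmult x y \<in> degree_ge n f (p + q + 1)"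
    using coord.subspace_add[OF subspace_degree_ge] by simp
qed

lemma homogeneous_decomp:
  assumes S: "S \<subseteq> degree_ge n f 1"
    and degree_one: "\<And>x. x \<in> degree_ge n f 1 \<Longrightarrow> \<exists>s\<in>coord.span S. x - s \<in> degree_ge n f 2"
    and c: "c < n" "1 \<le> f c"
  shows "\<exists>w\<in>word_span tmult (unit_vec 0) S (f c). unit_vec c - w \<in> degree_ge n f (f c + 1)"
  using c
proof (induct "f c" arbitrary: c rule: less_induct)
  case less
  show ?case
  proof (cases "f c = 1")
    case True
    then have "unit_vec c \<in> degree_ge n f 1"
      using unit_vec_in_degree_ge[OF less.prems(1), of f] by simp
    then obtain s where "s \<in> coord.span S" "unit_vec c - s \<in> degree_ge n f 2"
      using degree_one by blast
    then show ?thesis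
      using True span_subset_word_span_one by (intro bexI[of _ s]) (auto simp: numeral_2_eq_2)
  next
    case False
    then obtain a b where ab: "a < n" "b < n" "tab a b = c" "1 \<le> f a" "1 \<le> f b"
      using degree_split less.prems by force
    then have f_c: "f c = f a + f b" using degree_tab less.prems by blast
    obtain x where x: "x \<in> word_span tmult (unit_vec 0) S (f a)" "unit_vec a - x \<in> degree_ge n f (f a + 1)"
      using less.hyps[of a] ab f_c by auto
    obtain y where y: "y \<in> word_span tmult (unit_vec 0) S (f b)" "unit_vec b - y \<in> degree_ge n f (f b + 1)"
      using less.hyps[of b] ab f_c by auto
    have "tmult (unit_vec a) (unit_vec b) = (unit_vec c :: nat \<Rightarrow> 'a)"
      using table_mult_unit_vec[OF ab(1,2), of tab, where 'a = 'a] ab(3) less.prems by simp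
    then show ?thesis
      using mult_approx[OF S ab(4,5) x y] f_c by (intro bexI[of _ "tmult x y"]) auto
  qed
qed

lemma unit_vec_in_Lspan_top:
  assumes S: "S \<subseteq> degree_ge n f 1"
    and degree_one: "\<And>x. x \<in> degree_ge n f 1 \<Longrightarrow> \<exists>s\<in>coord.span S. x - s \<in> degree_ge n f 2"
    and "c < n"
  shows "unit_vec c \<in> Lspan tmult (unit_vec 0) S j"
  using \<open>c < n\<close>
proof (induct "j - f c" arbitrary: c rule: less_induct)
  case less
  let ?L = "Lspan tmult (unit_vec 0) S j"
  show ?case
  proof (cases "c = 0")
    case True
    have "unit_vec 0 \<in> ?L" by (rule word_in_Lspan[OF is_word.word_unit]) simp
    then show ?thesis using True by simp
  next
    case False
    then have f_c: "1 \<le> f c" "f c \<le> j" using degree_range less.prems by auto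
    then obtain w where w: "w \<in> word_span tmult (unit_vec 0) S (f c)"
      and r: "unit_vec c - w \<in> degree_ge n f (f c + 1)"
      using homogeneous_decomp[OF S degree_one less.prems] by blast
    have "w \<in> ?L" using w word_span_subset_Lspan[OF f_c(2)] by blast
    moreover have "unit_vec c - w \<in> ?L"
    proof (rule vecs_in_subspace[OF subsetD[OF degree_ge_subset_vecs r] subspace_Lspan])
      fix i assume i: "i < n" "(unit_vec c - w) i \<noteq> 0"
      then have "f c < f i" using r by (auto simp: degree_ge_def)
      then have "i \<noteq> 0" using degree_0 by (metis not_less0)
      then have "f i \<le> j" using degree_range[of i] i(1) by simp
      then show "unit_vec i \<in> ?L" using less.hyps[of i] \<open>f c < f i\<close> i(1) by simp
    qed
    ultimately have "w + (unit_vec c - w) \<in> ?L" by (rule coord.subspace_add[OF subspace_Lspan])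
    then show ?thesis by simp
  qed
qed

lemma generates_Lspan_top:
  assumes gen: "generates n tmult (unit_vec 0) T"
  shows "Lspan tmult (unit_vec 0) T j = (vecs n :: (nat \<Rightarrow> 'a::field) set)"
proof -
  interpret coord_algebra n "tmult :: (nat \<Rightarrow> 'a) \<Rightarrow> _" "unit_vec 0"
    by (rule coord_algebra)
  have T: "T \<subseteq> vecs n" using gen by (simp add: generates_def)
  have S: "nonunit_part ` T \<subseteq> degree_ge n f 1" using T nonunit_part_in_degree_ge by blast
  have "nonunit_part ` T \<subseteq> Lspan tmult (unit_vec 0) T 1"
    unfolding nonunit_part_def using unit_minus_scale_in_Lspan_one by blast
  then have "Lspan tmult (unit_vec 0) (nonunit_part ` T) j \<subseteq> Lspan tmult (unit_vec 0) T j"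
    by (rule Lspan_subset_of_generators[OF T])
  moreover have "vecs n \<subseteq> Lspan tmult (unit_vec 0) (nonunit_part ` T) j"
    using unit_vec_in_Lspan_top[OF S degree_one_decomp[OF gen]]
    by (auto intro: vecs_in_subspace subspace_Lspan)
  ultimately show ?thesis using Lspan_subset_vecs[OF T] by blast
qed

lemma alg_has_length: "alg_has_length n (tmult :: (nat \<Rightarrow> 'a::field) \<Rightarrow> _) (unit_vec 0) j"
  unfolding alg_has_length_def
proof (intro conjI allI impI)
  show "\<exists>S. generates n (tmult :: (nat \<Rightarrow> 'a) \<Rightarrow> _) (unit_vec 0) S \<and> gen_length n tmult (unit_vec 0) S = j"
    using degree_one_generators_length by blast
  fix S :: "(nat \<Rightarrow> 'a) set"
  assume "generates n tmult (unit_vec 0) S"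
  then show "gen_length n tmult (unit_vec 0) S \<le> j"
    unfolding gen_length_def by (intro Least_le generates_Lspan_top)
qed

end

text \<open>An enumeration \<open>g\<close> of the chain \<open>D\<close> gives the basis vectors \<open>1, \<dots>, card D\<close> the
  elements of \<open>D\<close> as degrees; the remaining basis vectors get degree \<open>1\<close> and multiply to \<open>0\<close>.\<close>

locale chain_enumeration =
  fixes D :: "nat set" and j N :: nat and g :: "nat \<Rightarrow> nat"
  assumes chain: "addition_chain D j" and card_less: "card D < N"
    and enum: "bij_betw g {1..card D} D"
begin

definition chain_index :: "nat \<Rightarrow> nat" where
  "chain_index = inv_into {1..card D} g"

definition chain_degree :: "nat \<Rightarrow> nat" where
  "chain_degree i = (if i = 0 then 0 else if i \<le> card D then g i else 1)"

definition chain_tab :: "nat \<Rightarrow> nat \<Rightarrow> nat" where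
  "chain_tab a b = (if a = 0 then b else if b = 0 then a
    else if a \<le> card D \<and> b \<le> card D \<and> g a + g b \<in> D then chain_index (g a + g b) else N)"

lemma chain_range: "D \<subseteq> {1..j}" and chain_top: "j \<in> D"
  using chain unfolding addition_chain_def by blast+

lemma enum_in_chain: "i \<in> {1..card D} \<Longrightarrow> g i \<in> D"
  using bij_betwE[OF enum] by blast

lemma chain_index_in_range: "d \<in> D \<Longrightarrow> chain_index d \<in> {1..card D}"
  using bij_betwE[OF bij_betw_inv_into[OF enum]] by (auto simp: chain_index_def)

lemma enum_chain_index: "d \<in> D \<Longrightarrow> g (chain_index d) = d"
  using enum by (simp add: chain_index_def bij_betw_inv_into_right)

lemma chain_index_enum: "i \<in> {1..card D} \<Longrightarrow> chain_index (g i) = i"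
  using enum by (simp add: chain_index_def bij_betw_inv_into_left)

lemma chain_degree_index: "d \<in> D \<Longrightarrow> chain_degree (chain_index d) = d"
  using chain_index_in_range[of d] enum_chain_index[of d] by (simp add: chain_degree_def)

lemma chain_degree_tab:
  assumes "chain_tab a b < N"
  shows "chain_degree (chain_tab a b) = chain_degree a + chain_degree b"
proof (cases "a = 0 \<or> b = 0")
  case True
  then show ?thesis by (auto simp: chain_tab_def chain_degree_def)
next
  case False
  have "a \<le> card D \<and> b \<le> card D \<and> g a + g b \<in> D"
  proof (rule ccontr)
    assume "\<not> (a \<le> card D \<and> b \<le> card D \<and> g a + g b \<in> D)"
    then have "chain_tab a b = N" using False by (auto simp: chain_tab_def)
    then show False using assms by simp
  qed
  then show ?thesis
    using False chain_degree_index[of "g a + g b"] by (simp add: chain_tab_def chain_degree_def)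
qed

lemma chain_degree_split:
  assumes "2 \<le> chain_degree c"
  shows "\<exists>a<N. \<exists>b<N. chain_tab a b = c \<and> 1 \<le> chain_degree a \<and> 1 \<le> chain_degree b"
proof -
  have c: "c \<in> {1..card D}"
    using assms by (cases "c = 0"; cases "c \<le> card D") (simp_all add: chain_degree_def)
  then have "1 < g c" using assms by (simp add: chain_degree_def)
  then obtain p q where pq: "p \<in> D" "q \<in> D" "p + q = g c"
    using chain enum_in_chain[OF c] unfolding addition_chain_def by blast
  let ?a = "chain_index p" and ?b = "chain_index q"
  have a: "?a \<in> {1..card D}" "g ?a = p" "chain_degree ?a = p"
    using pq(1) chain_index_in_range enum_chain_index chain_degree_index by blast+
  have b: "?b \<in> {1..card D}" "g ?b = q" "chain_degree ?b = q"
    using pq(2) chain_index_in_range enum_chain_index chain_degree_index by blast+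
  have "chain_tab ?a ?b = chain_index (g c)"
    using a(1,2) b(1,2) pq(3) enum_in_chain[OF c] by (simp add: chain_tab_def)
  also have "\<dots> = c" by (rule chain_index_enum[OF c])
  finally have "chain_tab ?a ?b = c" .
  moreover have "1 \<le> p" "1 \<le> q" using pq chain_range by auto
  moreover have "?a < N" "?b < N" using a(1) b(1) card_less by auto
  ultimately have "?a < N \<and> ?b < N \<and> chain_tab ?a ?b = c \<and> 1 \<le> chain_degree ?a \<and> 1 \<le> chain_degree ?b"
    using a(3) b(3) by simp
  then show ?thesis by blast
qed

sublocale graded_table N chain_tab chain_degree j
proof
  show "1 \<le> j" using chain_range chain_top by auto
  show "chain_tab 0 b = b" "chain_tab a 0 = a" for a b by (simp_all add: chain_tab_def)
  show "chain_degree 0 = 0" by (simp add: chain_degree_def)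
  show "1 \<le> chain_degree i \<and> chain_degree i \<le> j" if "0 < i" for i
    using that enum_in_chain[of i] chain_range chain_top by (auto simp: chain_degree_def)
  show "chain_degree (chain_tab a b) = chain_degree a + chain_degree b" if "chain_tab a b < N" for a b
    using that by (rule chain_degree_tab)
  show "\<exists>a<N. \<exists>b<N. chain_tab a b = c \<and> 1 \<le> chain_degree a \<and> 1 \<le> chain_degree b"
    if "2 \<le> chain_degree c" for c
    using that by (rule chain_degree_split)
  from chain_top have "chain_index j \<in> {1..card D}" "chain_degree (chain_index j) = j"
    by (rule chain_index_in_range, rule chain_degree_index)
  then have "chain_index j < N \<and> chain_degree (chain_index j) = j" using card_less by simp
  then show "\<exists>c<N. chain_degree c = j" by blast
qed

end

lemma graded_table_of_addition_chain:
  assumes chain: "addition_chain D j" and "card D < N"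
  shows "\<exists>tab f. graded_table N tab f j"
proof -
  have "finite D" using chain by (simp add: addition_chain_def)
  then obtain g where "bij_betw g {1..card D} D"
    using ex_bij_betw_nat_finite_1 by blast
  then interpret chain_enumeration D j N g
    using assms by unfold_locales
  show ?thesis using graded_table_axioms by blast
qed

section \<open>The length function \<open>B\<close>\<close>

lemma algebra_with_length_iff_addition_chain_fits:
  assumes "1 \<le> j"
  shows "(\<exists>(m :: (nat \<Rightarrow> 'a::field) \<Rightarrow> (nat \<Rightarrow> 'a) \<Rightarrow> nat \<Rightarrow> 'a) u.
      is_algebra N m u \<and> alg_has_length N m u j) \<longleftrightarrow> addition_chain_fits N j"
proof
  assume "\<exists>(m :: (nat \<Rightarrow> 'a) \<Rightarrow> (nat \<Rightarrow> 'a) \<Rightarrow> nat \<Rightarrow> 'a) u. is_algebra N m u \<and> alg_has_length N m u j"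
  then obtain m :: "(nat \<Rightarrow> 'a) \<Rightarrow> (nat \<Rightarrow> 'a) \<Rightarrow> nat \<Rightarrow> 'a" and u S
    where "is_algebra N m u" "generates N m u S" "gen_length N m u S = j"
    unfolding alg_has_length_def by blast
  then show "addition_chain_fits N j"
    using coord_algebra.addition_chain_fits_of_generates[OF coord_algebra.intro] assms by blast
next
  assume "addition_chain_fits N j"
  then obtain D where "addition_chain D j" "card D < N" by (auto simp: addition_chain_fits_def)
  then obtain tab f where "graded_table N tab f j" using graded_table_of_addition_chain by blast
  then show "\<exists>(m :: (nat \<Rightarrow> 'a) \<Rightarrow> (nat \<Rightarrow> 'a) \<Rightarrow> nat \<Rightarrow> 'a) u. is_algebra N m u \<and> alg_has_length N m u j"
    using graded_table.alg_has_length[of N tab f j] coord_algebra.is_algebra[OF graded_table.coord_algebra]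
    by blast
qed

lemma B_eq_Greatest_addition_chain_fits:
  "B TYPE('a::field) N = (GREATEST l. 0 < l \<and> (\<forall>j\<in>{1..l}. addition_chain_fits N j))"
  unfolding B_def by (simp add: algebra_with_length_iff_addition_chain_fits)

lemma le_B_if_addition_chains_fit:
  assumes "0 < l" "\<forall>j\<in>{1..l}. addition_chain_fits N j"
  shows "l \<le> B TYPE('a::field) N"
  unfolding B_eq_Greatest_addition_chain_fits
  by (rule Greatest_le_nat[where b = "2 ^ N"]) (use assms addition_chain_fits_le_pow in auto)

lemma addition_chain_fits_upto_B:
  assumes "2 \<le> N" "j \<in> {1..B TYPE('a::field) N}"
  shows "addition_chain_fits N j"
proof -
  let ?P = "\<lambda>l. 0 < l \<and> (\<forall>j\<in>{1..l}. addition_chain_fits N j)"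
  have "?P 1" using addition_chain_fits_one[OF assms(1)] by simp
  then have "?P (GREATEST l. ?P l)"
    by (rule GreatestI_nat[where b = "2 ^ N"]) (use addition_chain_fits_le_pow in auto)
  then show ?thesis using assms(2) unfolding B_eq_Greatest_addition_chain_fits by blast
qed

theorem proposition4p10:
  fixes n :: nat
  assumes "2 \<le> n"
  shows "B TYPE('a::field) (n + 2) \<ge> 2 * B TYPE('a) n + 1"
proof -
  have "addition_chain_fits (n + 2) j" if "j \<in> {1..2 * B TYPE('a) n + 1}" for j
  proof (cases "j = 1")
    case True
    then show ?thesis using addition_chain_fits_one by simp
  next
    case False
    then have "j div 2 \<in> {1..B TYPE('a) n}" using that by auto
    then show ?thesis using addition_chain_fits_half addition_chain_fits_upto_B[OF assms] by blast
  qed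
  then show ?thesis by (intro le_B_if_addition_chains_fit) auto
qed

end
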